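(* Fix $X\in\mathcal{E}$ and let $I$ be the (extended) Daniell integral associated with $X$. Let $f\in C(\mathbb{R})$ be a positive continuous function with bounded support. Then $f\in\mathbb{L}^\uparrow$ and $I(f)=f\circ X\in\mathcal{E}_+$.
   Context: Let $\mathcal{E}$ be an order complete vector lattice with a weak order unit $E$, $K$ its Stone space (extremally disconnected compact Hausdorff), and $C^\infty(K)$ the vector lattice of continuous functions $K\to[-\infty,\infty]$ finite off a nowhere dense set (identified when equal off a nowhere dense set), which is the universal completion $\mathcal{E}^u$. Fix a Maeda–Ogasawara representation of $\mathcal{E}$ as an order dense ideal of $C^\infty(K)$ with $E$ corresponding to $\mathbf{1}$. The sup-completion is $\mathcal{E}^s=\{f\in C(K,[-\infty,\infty]): f\ge g\text{ for some } g\in\mathcal{E}\}$. For $Y\in\mathcal{E}$, $P_Y$ denotes the band projection onto the band generated by $Y$. For a continuous $f:\mathbb{R}\to\mathbb{R}$ and $X\in C^\infty(K)$, $f\circ X$ denotes the unique element of $C^\infty(K)$ that agrees with $\omega\mapsto f(X(\omega))$ on the open dense set where $X$ is finite. Daniell calculus: $F(\mathbb{R})$ is the algebra of finite disjoint unions of intervals $(a,b]$, $(a,\infty)$, $(-\infty,b]$ ($a,b\in\mathbb{R}$), and $\mathbb{L}$ is the vector lattice of functions $f=\sum_{i=1}^n a_i\mathbf{1}_{S_i}$ with $a_i\in\mathbb{R}$ and $(S_i)$ a partition of $\mathbb{R}$ into sets of $F(\mathbb{R})$. For fixed $X\in\mathcal{E}$ the spectral system is $A_t=E-P_{(X-tE)^+}E$,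 with $A_\infty=\sup_tA_t$, $A_{-\infty}=\inf_tA_t$; the measure $\mu_A$ is $\mu_A(a,b]=A_b-A_a$, $\mu_A(a,\infty)=A_\infty-A_a$, $\mu_A(-\infty,b]=A_b-A_{-\infty}$, extended additively; the Daniell integral associated with $X$ is $I(f)=\sum_i a_i\mu_A(S_i)$ for $f=\sum_ia_i\mathbf{1}_{S_i}\in\mathbb{L}$. $\mathbb{L}^\uparrow$ is the set of $f:\mathbb{R}\to\overline{\mathbb{R}}$ for which there is a sequence $(f_n)\subseteq\mathbb{L}$ with $f_n(t)\uparrow f(t)$ for every $t$, and for such $f$, $I(f)=\sup_nI(f_n)\in\mathcal{E}^s$ (this is independent of the chosen sequence). *)

theory Defs
  imports "HOL-Analysis.Analysis" "HOL-Library.Extended_Real"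
begin

text \<open>K is the carrier type 'k (compact Hausdorff, extremally disconnected, assumed in the
theorem). Since two continuous extended-real functions that agree off a nowhere dense
set agree everywhere, the identification is equality, and the order (off nowhere dense sets)
is the pointwise order on functions.\<close>

definition nowhere_dense :: "'a::topological_space set \<Rightarrow> bool" where
  "nowhere_dense S \<longleftrightarrow> interior (closure S) = {}"

definition Cinf :: "('k::topological_space \<Rightarrow> ereal) set" where
  "Cinf = {g. continuous_on UNIV g \<and> nowhere_dense {w. \<bar>g w\<bar> = \<infinity>}}"

definition czero :: "'k \<Rightarrow> ereal" where "czero = (\<lambda>_. 0)"
definition cone :: "'k \<Rightarrow> ereal" where "cone = (\<lambda>_. 1)"

definition cadd :: "('k::topological_space \<Rightarrow> ereal) \<Rightarrow> ('k \<Rightarrow> ereal) \<Rightarrow> ('k \<Rightarrow> ereal)" where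
  "cadd g h = (THE u. u \<in> Cinf \<and> (\<forall>w. \<bar>g w\<bar> \<noteq> \<infinity> \<and> \<bar>h w\<bar> \<noteq> \<infinity> \<longrightarrow> u w = g w + h w))"

definition csmul :: "real \<Rightarrow> ('k \<Rightarrow> ereal) \<Rightarrow> ('k \<Rightarrow> ereal)" where
  "csmul c g = (\<lambda>w. ereal c * g w)"

definition csub :: "('k::topological_space \<Rightarrow> ereal) \<Rightarrow> ('k \<Rightarrow> ereal) \<Rightarrow> ('k \<Rightarrow> ereal)" where
  "csub g h = cadd g (\<lambda>w. - h w)"

definition cabs :: "('k \<Rightarrow> ereal) \<Rightarrow> ('k \<Rightarrow> ereal)" where
  "cabs g = (\<lambda>w. \<bar>g w\<bar>)"

definition cinf :: "('k \<Rightarrow> ereal) \<Rightarrow> ('k \<Rightarrow> ereal) \<Rightarrow> ('k \<Rightarrow> ereal)" where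
  "cinf g h = (\<lambda>w. min (g w) (h w))"

definition is_lub_in :: "('k \<Rightarrow> ereal) set \<Rightarrow> ('k \<Rightarrow> ereal) set \<Rightarrow> ('k \<Rightarrow> ereal) \<Rightarrow> bool" where
  "is_lub_in V S u \<longleftrightarrow> u \<in> V \<and> (\<forall>s\<in>S. s \<le> u) \<and> (\<forall>v\<in>V. (\<forall>s\<in>S. s \<le> v) \<longrightarrow> u \<le> v)"

definition is_glb_in :: "('k \<Rightarrow> ereal) set \<Rightarrow> ('k \<Rightarrow> ereal) set \<Rightarrow> ('k \<Rightarrow> ereal) \<Rightarrow> bool" where
  "is_glb_in V S u \<longleftrightarrow> u \<in> V \<and> (\<forall>s\<in>S. u \<le> s) \<and> (\<forall>v\<in>V. (\<forall>s\<in>S. v \<le> s) \<longrightarrow> v \<le> u)"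

definition ideal_in :: "('k::topological_space \<Rightarrow> ereal) set \<Rightarrow> ('k \<Rightarrow> ereal) set \<Rightarrow> bool" where
  "ideal_in V B \<longleftrightarrow> B \<subseteq> V \<and> czero \<in> B \<and> (\<forall>g\<in>B. \<forall>h\<in>B. cadd g h \<in> B)
     \<and> (\<forall>c. \<forall>g\<in>B. csmul c g \<in> B)
     \<and> (\<forall>g\<in>V. \<forall>h\<in>B. cabs g \<le> cabs h \<longrightarrow> g \<in> B)"

definition band_in :: "('k::topological_space \<Rightarrow> ereal) set \<Rightarrow> ('k \<Rightarrow> ereal) set \<Rightarrow> bool" where
  "band_in V B \<longleftrightarrow> ideal_in V B \<and> (\<forall>S u. S \<subseteq> B \<longrightarrow> is_lub_in V S u \<longrightarrow> u \<in> B)"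

definition band_gen :: "('k::topological_space \<Rightarrow> ereal) set \<Rightarrow> ('k \<Rightarrow> ereal) \<Rightarrow> ('k \<Rightarrow> ereal) set" where
  "band_gen V Y = \<Inter>{B. band_in V B \<and> Y \<in> B}"

definition disj_compl :: "('k \<Rightarrow> ereal) set \<Rightarrow> ('k \<Rightarrow> ereal) set \<Rightarrow> ('k \<Rightarrow> ereal) set" where
  "disj_compl V B = {g\<in>V. \<forall>h\<in>B. cinf (cabs g) (cabs h) = czero}"

definition band_proj :: "('k::topological_space \<Rightarrow> ereal) set \<Rightarrow> ('k \<Rightarrow> ereal) \<Rightarrow> ('k \<Rightarrow> ereal) \<Rightarrow> ('k \<Rightarrow> ereal)" where
  "band_proj V Y Z = (THE P. P \<in> band_gen V Y \<and>
      (\<exists>W\<in>disj_compl V (band_gen V Y). Z = cadd P W))"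

definition specA :: "('k::topological_space \<Rightarrow> ereal) set \<Rightarrow> ('k \<Rightarrow> ereal) \<Rightarrow> real \<Rightarrow> ('k \<Rightarrow> ereal)" where
  "specA V X t = csub cone (band_proj V (\<lambda>w. max (X w - ereal t) 0) cone)"

definition specA_top :: "('k::topological_space \<Rightarrow> ereal) set \<Rightarrow> ('k \<Rightarrow> ereal) \<Rightarrow> ('k \<Rightarrow> ereal)" where
  "specA_top V X = (THE u. is_lub_in V (range (specA V X)) u)"

definition specA_bot :: "('k::topological_space \<Rightarrow> ereal) set \<Rightarrow> ('k \<Rightarrow> ereal) \<Rightarrow> ('k \<Rightarrow> ereal)" where
  "specA_bot V X = (THE u. is_glb_in V (range (specA V X)) u)"

datatype ivl = OC real real | Ray real | Low real

fun ivl_set :: "ivl \<Rightarrow> real set" where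
  "ivl_set (OC a b) = {a<..b}"
| "ivl_set (Ray a) = {a<..}"
| "ivl_set (Low b) = {..b}"

fun ivl_ok :: "ivl \<Rightarrow> bool" where
  "ivl_ok (OC a b) \<longleftrightarrow> a < b"
| "ivl_ok (Ray a) \<longleftrightarrow> True"
| "ivl_ok (Low b) \<longleftrightarrow> True"

fun muA :: "('k::topological_space \<Rightarrow> ereal) set \<Rightarrow> ('k \<Rightarrow> ereal) \<Rightarrow> ivl \<Rightarrow> ('k \<Rightarrow> ereal)" where
  "muA V X (OC a b) = csub (specA V X b) (specA V X a)"
| "muA V X (Ray a) = csub (specA_top V X) (specA V X a)"
| "muA V X (Low b) = csub (specA V X b) (specA_bot V X)"

text \<open>A representation of a step function g in L: g = sum_k c_k 1_{J_k}, where the J_k are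
basic intervals partitioning R (this is a partition into sets of F(R) refined into its
constituent intervals; mu_A on F(R) is the additive extension).\<close>
definition step_rep :: "(real \<times> ivl) list \<Rightarrow> (real \<Rightarrow> real) \<Rightarrow> bool" where
  "step_rep R g \<longleftrightarrow>
     (\<forall>i<length R. ivl_ok (snd (R ! i)))
   \<and> (\<forall>i<length R. \<forall>j<length R. i \<noteq> j \<longrightarrow> ivl_set (snd (R ! i)) \<inter> ivl_set (snd (R ! j)) = {})
   \<and> (\<Union>i<length R. ivl_set (snd (R ! i))) = UNIV
   \<and> g = (\<lambda>t. \<Sum>i<length R. if t \<in> ivl_set (snd (R ! i)) then fst (R ! i) else 0)"

definition Lspace :: "(real \<Rightarrow> real) set" where
  "Lspace = {g. \<exists>R. step_rep R g}"

definition rep_val :: "('k::topological_space \<Rightarrow> ereal) set \<Rightarrow> ('k \<Rightarrow> ereal) \<Rightarrow> (real \<times> ivl) list \<Rightarrow> ('k \<Rightarrow> ereal)" where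
  "rep_val V X R = foldr (\<lambda>(c, J) acc. cadd (csmul c (muA V X J)) acc) R czero"

definition DI :: "('k::topological_space \<Rightarrow> ereal) set \<Rightarrow> ('k \<Rightarrow> ereal) \<Rightarrow> (real \<Rightarrow> real) \<Rightarrow> ('k \<Rightarrow> ereal)" where
  "DI V X g = (THE v. \<forall>R. step_rep R g \<longrightarrow> v = rep_val V X R)"

definition approx_up :: "(nat \<Rightarrow> real \<Rightarrow> real) \<Rightarrow> (real \<Rightarrow> ereal) \<Rightarrow> bool" where
  "approx_up fs F \<longleftrightarrow> (\<forall>n. fs n \<in> Lspace) \<and>
     (\<forall>t. incseq (\<lambda>n. ereal (fs n t)) \<and> (\<lambda>n. ereal (fs n t)) \<longlonglongrightarrow> F t)"

definition Lup :: "(real \<Rightarrow> ereal) set" where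
  "Lup = {F. \<exists>fs. approx_up fs F}"

definition Es :: "('k::topological_space \<Rightarrow> ereal) set \<Rightarrow> ('k \<Rightarrow> ereal) set" where
  "Es V = {g. continuous_on UNIV g \<and> (\<exists>h\<in>V. h \<le> g)}"

definition fcomp :: "(real \<Rightarrow> real) \<Rightarrow> ('k::topological_space \<Rightarrow> ereal) \<Rightarrow> ('k \<Rightarrow> ereal)" where
  "fcomp f X = (THE g. g \<in> Cinf \<and> (\<forall>w. \<bar>X w\<bar> \<noteq> \<infinity> \<longrightarrow> g w = ereal (f (real_of_ereal (X w)))))"

end

theory Submission
  imports Defs
begin

(* In the Maeda-Ogasawara model the band generated by (X - t)^+ consists of the functions
   vanishing off the clopen set above t = closure {X > t}, so the spectral system is
   A_t = 1 - indicator (above t) and the Daniell integral of every step function g is a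
   continuous real-valued function on K.  At a peak, a point w with X w = x and w not in
   above x, its value is g x; the peaks are dense, because X attains its maximum on compact
   open sets.  So if f_n increases to f, the integrals I(f_n) and f o X are continuous
   functions whose order is decided on a dense set, which makes f o X their supremum.
   Finally, f itself is the increasing limit of the step functions taking the infimum of f
   on the dyadic intervals of level n in (-n, n]. *)

section \<open>Extremally disconnected spaces\<close>

lemma continuous_on_le_on_dense:
  fixes u v :: "'a::topological_space \<Rightarrow> 'b::linorder_topology"
  assumes "continuous_on UNIV u" "continuous_on UNIV v" "closure D = UNIV" "\<And>x. x \<in> D \<Longrightarrow> u x \<le> v x"
  shows "u x \<le> v x"
proof -
  have "closure D \<subseteq> {x. u x \<le> v x}"
    using assms by (intro closure_minimal closed_Collect_le) auto
  then show ?thesis using assms(3) by auto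
qed

lemma continuous_on_eq_on_dense:
  fixes u v :: "'a::topological_space \<Rightarrow> 'b::linorder_topology"
  assumes "continuous_on UNIV u" "continuous_on UNIV v" "closure D = UNIV" "\<And>x. x \<in> D \<Longrightarrow> u x = v x"
  shows "u = v"
proof
  fix x show "u x = v x"
    using continuous_on_le_on_dense[OF assms(1-3)] continuous_on_le_on_dense[OF assms(2,1,3)] assms(4)
    by (simp add: antisym)
qed

lemma continuous_on_indicator_clopen:
  fixes S :: "'a::t2_space set"
  assumes "open S" "closed S"
  shows "continuous_on UNIV (indicator S :: 'a \<Rightarrow> real)"
proof -
  have "frontier S = {}" using assms by (simp add: frontier_def interior_open)
  then show ?thesis by (simp add: continuous_at_imp_continuous_on isCont_indicator)
qed

lemma nowhere_dense_subset: "A \<subseteq> B \<Longrightarrow> nowhere_dense B \<Longrightarrow> nowhere_dense A"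
  unfolding nowhere_dense_def by (metis closure_mono interior_mono subset_empty)

lemma nowhere_dense_Un: "nowhere_dense A \<Longrightarrow> nowhere_dense B \<Longrightarrow> nowhere_dense (A \<union> B)"
  unfolding nowhere_dense_def by (simp add: interior_closed_Un_empty_interior)

lemma closure_compl_nowhere_dense:
  assumes "nowhere_dense S" shows "closure (- S) = UNIV"
proof -
  have "interior S = {}"
    using assms interior_mono[OF closure_subset, of S] unfolding nowhere_dense_def by blast
  then show ?thesis by (simp add: closure_interior)
qed

lemma continuous_on_Inf_clopen_family:
  fixes Cl :: "real \<Rightarrow> 'a::topological_space set"
  assumes mono: "\<And>r s. r \<le> s \<Longrightarrow> Cl r \<subseteq> Cl s" and opn: "\<And>r. open (Cl r)" and cls: "\<And>r. closed (Cl r)"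
  shows "continuous_on UNIV (\<lambda>w. Inf {ereal r | r. w \<in> Cl r})"
proof -
  define F where "F w = Inf {ereal r | r. w \<in> Cl r}" for w
  have low: "ereal s \<le> F y" if "y \<notin> Cl s" for y s
    unfolding F_def
  proof (rule Inf_greatest, clarsimp)
    fix r assume "y \<in> Cl r"
    show "s \<le> r"
    proof (rule ccontr)
      assume "\<not> s \<le> r" then have "Cl r \<subseteq> Cl s" using mono by simp
      then show False using that \<open>y \<in> Cl r\<close> by auto
    qed
  qed
  have up: "F y \<le> ereal r" if "y \<in> Cl r" for y r
    unfolding F_def using that by (intro Inf_lower) auto
  have "continuous_on UNIV F"
    unfolding continuous_on_def
  proof (intro ballI order_tendstoI)
    fix x :: 'a and a assume "a < F x"
    then obtain s where s: "a < ereal s" "ereal s < F x" using ereal_dense2 by blast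
    then have "x \<notin> Cl s" using up by (meson leD)
    moreover have "open (- Cl s)" using cls by auto
    ultimately have "\<forall>\<^sub>F y in at x within UNIV. y \<in> - Cl s"
      by (intro eventually_at_topological[THEN iffD2]) blast
    then show "\<forall>\<^sub>F y in at x within UNIV. a < F y"
      by eventually_elim (meson ComplD low s(1) less_le_trans)
  next
    fix x :: 'a and b assume "F x < b"
    then obtain e where e: "e \<in> {ereal r | r. x \<in> Cl r}" "e < b" unfolding F_def Inf_less_iff by blast
    then obtain r where r: "e = ereal r" "x \<in> Cl r" by auto
    have "\<forall>\<^sub>F y in at x within UNIV. y \<in> Cl r"
      using opn r(2) by (intro eventually_at_topological[THEN iffD2]) blast
    then show "\<forall>\<^sub>F y in at x within UNIV. F y < b"
      by eventually_elim (metis up e(2) r(1) le_less_trans)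
  qed
  then show ?thesis unfolding F_def .
qed

text \<open>In an extremally disconnected space the closures of the sublevel sets of a function
  continuous on a dense set are clopen; the infimum of the levels whose closed sublevel set
  contains a point is a continuous extension.\<close>

lemma extremally_disconnected_continuous_extension:
  fixes D :: "'a::topological_space set" and \<phi> :: "'a \<Rightarrow> ereal"
  assumes ed: "\<forall>U::'a set. open U \<longrightarrow> open (closure U)"
    and dense: "closure D = UNIV" and cont: "continuous_on D \<phi>"
  obtains F where "continuous_on UNIV F" "\<And>x. x \<in> D \<Longrightarrow> F x = \<phi> x"
proof -
  define Cl where "Cl r = closure {x\<in>D. \<phi> x < ereal r}" for r
  have opn: "open (Cl r)" for r
  proof -
    obtain G where G: "open G" "G \<inter> D = \<phi> -` {..<ereal r} \<inter> D"
      using cont unfolding continuous_on_open_invariant by (meson open_lessThan)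
    have "{x\<in>D. \<phi> x < ereal r} = \<phi> -` {..<ereal r} \<inter> D" by auto
    then have "{x\<in>D. \<phi> x < ereal r} = G \<inter> D" using G(2) by simp
    moreover have "closure (G \<inter> D) = closure G"
    proof
      show "closure (G \<inter> D) \<subseteq> closure G" by (simp add: closure_mono)
      have "G \<subseteq> closure (G \<inter> D)" using open_Int_closure_subset[OF G(1), of D] dense by simp
      then show "closure G \<subseteq> closure (G \<inter> D)" by (simp add: closure_minimal)
    qed
    ultimately have "Cl r = closure G" unfolding Cl_def by simp
    then show ?thesis using ed G(1) by simp
  qed
  have mono: "Cl r \<subseteq> Cl s" if "r \<le> s" for r s
    unfolding Cl_def using that by (intro closure_mono) (auto intro: order.strict_trans2)
  define F where "F w = Inf {ereal r | r. w \<in> Cl r}" for w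
  have cont_F: "continuous_on UNIV F"
    unfolding F_def by (rule continuous_on_Inf_clopen_family[OF mono opn]) (auto simp: Cl_def)
  have "F x = \<phi> x" if xD: "x \<in> D" for x
  proof (rule antisym)
    show "F x \<le> \<phi> x"
    proof (rule dense_ge)
      fix y assume "\<phi> x < y"
      show "F x \<le> y"
      proof (cases y)
        case (real r)
        then have "x \<in> Cl r" using xD \<open>\<phi> x < y\<close> closure_subset[of "{x\<in>D. \<phi> x < ereal r}"]
          unfolding Cl_def by blast
        then show ?thesis unfolding F_def real by (intro Inf_lower) auto
      qed (use \<open>\<phi> x < y\<close> in auto)
    qed
    show "\<phi> x \<le> F x"
      unfolding F_def
    proof (rule Inf_greatest, clarsimp)
      fix r assume xr: "x \<in> Cl r"
      show "\<phi> x \<le> ereal r"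
      proof (rule ccontr)
        assume "\<not> \<phi> x \<le> ereal r"
        then have gt: "ereal r < \<phi> x" by simp
        obtain G where G: "open G" "G \<inter> D = \<phi> -` {ereal r<..} \<inter> D"
          using cont unfolding continuous_on_open_invariant by (meson open_greaterThan)
        have "G \<inter> {x\<in>D. \<phi> x < ereal r} = (G \<inter> D) \<inter> {x. \<phi> x < ereal r}" by blast
        also have "\<dots> = {}" unfolding G(2) by auto
        finally have "G \<inter> {x\<in>D. \<phi> x < ereal r} = {}" .
        then have "G \<inter> Cl r = {}" unfolding Cl_def using open_Int_closure_eq_empty[OF G(1)] by simp
        moreover have "x \<in> G" using G(2) xD gt by blast
        ultimately show False using xr by auto
      qed
    qed
  qed
  with cont_F show thesis by (rule that)
qed

lemma Hausdorff_space_euclidean_t2: "Hausdorff_space (euclidean :: 'a::t2_space topology)"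
  unfolding Hausdorff_space_def disjnt_def by (metis hausdorff open_openin)

lemma extremally_disconnected_compact_open_nhd:
  fixes W :: "'a::t2_space set"
  assumes K: "compact (UNIV :: 'a set)" and ed: "\<forall>U::'a set. open U \<longrightarrow> open (closure U)"
    and W: "open W" "w \<in> W"
  obtains Q where "open Q" "compact Q" "w \<in> Q" "Q \<subseteq> W"
proof -
  have "compact (- W)" using compact_Int_closed[OF K closed_Compl[OF W(1)]] by simp
  then obtain U V where UV: "open U" "open V" "w \<in> U" "- W \<subseteq> V" "U \<inter> V = {}"
    using Hausdorff_space_compact_separation[OF Hausdorff_space_euclidean_t2, of "{w}" "- W"] W(2)
    by (auto simp: disjnt_def)
  have "closure U \<subseteq> - V" using UV by (intro closure_minimal) auto
  then have "closure U \<subseteq> W" using UV(4) by blast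
  moreover have "compact (closure U)" using compact_Int_closed[OF K closed_closure] by simp
  ultimately show thesis
    using that[of "closure U"] ed UV(1,3) closure_subset[of U] by blast
qed

section \<open>The universal completion C^infinity(K)\<close>

lemma Cinf_continuous: "g \<in> Cinf \<Longrightarrow> continuous_on UNIV g"
  unfolding Cinf_def by simp

lemma Cinf_intro:
  fixes g :: "'a::topological_space \<Rightarrow> ereal"
  assumes "continuous_on UNIV g" "nowhere_dense S" "\<And>w. \<bar>g w\<bar> = \<infinity> \<Longrightarrow> w \<in> S"
  shows "g \<in> Cinf"
proof -
  have "{w. \<bar>g w\<bar> = \<infinity>} \<subseteq> S" using assms(3) by auto
  then show ?thesis using assms(1,2) nowhere_dense_subset unfolding Cinf_def by blast
qed

lemma Cinf_of_real: "continuous_on UNIV p \<Longrightarrow> (\<lambda>w. ereal (p w)) \<in> Cinf"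
  by (rule Cinf_intro[of _ "{}"]) (auto simp: nowhere_dense_def continuous_on_ereal)

lemma closure_Cinf_finite2:
  assumes "g \<in> Cinf" "h \<in> Cinf"
  shows "closure {w. \<bar>g w\<bar> \<noteq> \<infinity> \<and> \<bar>h w\<bar> \<noteq> \<infinity>} = UNIV"
proof -
  have "{w. \<bar>g w\<bar> \<noteq> \<infinity> \<and> \<bar>h w\<bar> \<noteq> \<infinity>} = - ({w. \<bar>g w\<bar> = \<infinity>} \<union> {w. \<bar>h w\<bar> = \<infinity>})"
    by auto
  also have "closure \<dots> = UNIV"
    using assms by (intro closure_compl_nowhere_dense nowhere_dense_Un) (simp_all add: Cinf_def)
  finally show ?thesis .
qed

lemma closure_Cinf_finite: "g \<in> Cinf \<Longrightarrow> closure {w. \<bar>g w\<bar> \<noteq> \<infinity>} = UNIV"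
  using closure_Cinf_finite2[of g g] by simp

lemma the_Cinf_eqI:
  assumes "closure D = UNIV" "F \<in> Cinf" "\<And>w. w \<in> D \<Longrightarrow> F w = \<phi> w"
  shows "(THE u. u \<in> Cinf \<and> (\<forall>w. w \<in> D \<longrightarrow> u w = \<phi> w)) = F"
proof (rule the_equality)
  show "F \<in> Cinf \<and> (\<forall>w. w \<in> D \<longrightarrow> F w = \<phi> w)" using assms(2,3) by blast
  fix u assume u: "u \<in> Cinf \<and> (\<forall>w. w \<in> D \<longrightarrow> u w = \<phi> w)"
  show "u = F"
    by (rule continuous_on_eq_on_dense[OF Cinf_continuous Cinf_continuous assms(1)])
      (use u assms(2,3) in auto)
qed

lemma cadd_apply:
  fixes g h :: "'k::topological_space \<Rightarrow> ereal"
  assumes ed: "\<forall>U::'k set. open U \<longrightarrow> open (closure U)" and g: "g \<in> Cinf" and h: "h \<in> Cinf"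
    and fin: "\<bar>g w\<bar> \<noteq> \<infinity>" "\<bar>h w\<bar> \<noteq> \<infinity>"
  shows "cadd g h w = g w + h w"
proof -
  define D where "D = {w. \<bar>g w\<bar> \<noteq> \<infinity> \<and> \<bar>h w\<bar> \<noteq> \<infinity>}"
  have dense: "closure D = UNIV" unfolding D_def using closure_Cinf_finite2[OF g h] .
  have "continuous_on D (\<lambda>w. g w + h w)"
    unfolding continuous_on_def
  proof
    fix x assume "x \<in> D"
    have "continuous_on D g" "continuous_on D h"
      using g h by (auto intro: continuous_on_subset Cinf_continuous)
    then have "(g \<longlongrightarrow> g x) (at x within D)" "(h \<longlongrightarrow> h x) (at x within D)"
      using \<open>x \<in> D\<close> unfolding continuous_on_def by auto
    then show "((\<lambda>w. g w + h w) \<longlongrightarrow> g x + h x) (at x within D)"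
      using \<open>x \<in> D\<close> unfolding D_def by (intro tendsto_add_ereal) auto
  qed
  then obtain F where F: "continuous_on UNIV F" "\<And>w. w \<in> D \<Longrightarrow> F w = g w + h w"
    using extremally_disconnected_continuous_extension[OF ed dense] by blast
  have "nowhere_dense ({w. \<bar>g w\<bar> = \<infinity>} \<union> {w. \<bar>h w\<bar> = \<infinity>})"
    using g h by (intro nowhere_dense_Un) (simp_all add: Cinf_def)
  moreover have "w \<in> {w. \<bar>g w\<bar> = \<infinity>} \<union> {w. \<bar>h w\<bar> = \<infinity>}" if "\<bar>F w\<bar> = \<infinity>" for w
    using that F(2)[of w] unfolding D_def by (cases "g w"; cases "h w") auto
  ultimately have "F \<in> Cinf" by (rule Cinf_intro[OF F(1)])
  then have "cadd g h = F"
    unfolding cadd_def using the_Cinf_eqI[OF dense _ F(2)] by (simp add: D_def)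
  then show ?thesis using fin F(2) unfolding D_def by simp
qed

lemma cadd_ereal:
  assumes "continuous_on UNIV p" "continuous_on UNIV q"
  shows "cadd (\<lambda>w. ereal (p w)) (\<lambda>w. ereal (q w)) = (\<lambda>w. ereal (p w + q w))"
proof -
  have "continuous_on UNIV (\<lambda>w. p w + q w)" using assms by (intro continuous_intros)
  then show ?thesis
    unfolding cadd_def using the_Cinf_eqI[of UNIV "\<lambda>w. ereal (p w + q w)"] by (simp add: Cinf_of_real)
qed

lemma csmul_continuous: "continuous_on UNIV g \<Longrightarrow> continuous_on UNIV (csmul c g)"
  unfolding csmul_def continuous_on_def by (auto intro!: tendsto_cmult_ereal)

lemma
  fixes X :: "'k::topological_space \<Rightarrow> ereal"
  assumes ed: "\<forall>U::'k set. open U \<longrightarrow> open (closure U)" and X: "X \<in> Cinf"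
    and f: "continuous_on UNIV f" and bound: "\<And>t. \<bar>f t\<bar> \<le> M"
  shows fcomp_continuous: "continuous_on UNIV (fcomp f X)"
    and fcomp_apply: "X w = ereal x \<Longrightarrow> fcomp f X w = ereal (f x)"
    and fcomp_bound: "\<bar>fcomp f X w\<bar> \<le> ereal M"
proof -
  define D where "D = {w. \<bar>X w\<bar> \<noteq> \<infinity>}"
  have dense: "closure D = UNIV" unfolding D_def by (rule closure_Cinf_finite[OF X])
  have X_D: "continuous_on D X" using Cinf_continuous[OF X] by (rule continuous_on_subset) simp
  have "X ` D \<subseteq> UNIV - {\<infinity>, -\<infinity>}" unfolding D_def by auto
  then have "continuous_on D (real_of_ereal \<circ> X)"
    by (rule continuous_on_compose[OF X_D continuous_on_subset[OF continuous_on_real]])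
  then have "continuous_on D (f \<circ> (real_of_ereal \<circ> X))"
    by (rule continuous_on_compose[OF _ continuous_on_subset[OF f]]) simp
  then have "continuous_on D (\<lambda>w. ereal (f (real_of_ereal (X w))))"
    using continuous_on_ereal by (auto simp: o_def)
  then obtain F where F: "continuous_on UNIV F" "\<And>w. w \<in> D \<Longrightarrow> F w = ereal (f (real_of_ereal (X w)))"
    using extremally_disconnected_continuous_extension[OF ed dense] by blast
  have F_bound: "\<bar>F w\<bar> \<le> ereal M" for w
    by (rule continuous_on_le_on_dense[OF _ continuous_on_const dense])
      (use F bound in \<open>auto intro: continuous_intros\<close>)
  have "F \<in> Cinf"
  proof (rule Cinf_intro[OF F(1), of "{}"])
    show "\<bar>F w\<bar> = \<infinity> \<Longrightarrow> w \<in> {}" for w using F_bound[of w] by simp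
  qed (simp add: nowhere_dense_def)
  then have F_eq: "fcomp f X = F"
    unfolding fcomp_def using the_Cinf_eqI[OF dense _ F(2)] by (simp add: D_def)
  show "continuous_on UNIV (fcomp f X)" using F(1) F_eq by simp
  show "X w = ereal x \<Longrightarrow> fcomp f X w = ereal (f x)" using F(2)[of w] F_eq by (simp add: D_def)
  show "\<bar>fcomp f X w\<bar> \<le> ereal M" using F_bound F_eq by simp
qed

section \<open>Band projections and the spectral system\<close>

lemma band_gen_subset: "band_in V B \<Longrightarrow> Y \<in> B \<Longrightarrow> band_gen V Y \<subseteq> B"
  unfolding band_gen_def by (rule Inter_lower) simp

lemma is_lub_in_unique: "is_lub_in V S u \<Longrightarrow> is_lub_in V S u' \<Longrightarrow> u = u'"
  unfolding is_lub_in_def by (meson antisym)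

lemma is_glb_in_unique: "is_glb_in V S u \<Longrightarrow> is_glb_in V S u' \<Longrightarrow> u = u'"
  unfolding is_glb_in_def by (meson antisym)

definition closed_support :: "('a::topological_space \<Rightarrow> ereal) \<Rightarrow> 'a set" where
  "closed_support g = closure {w. g w \<noteq> 0}"

lemma zero_outside_closed_support: "w \<notin> closed_support g \<Longrightarrow> g w = 0"
  using closure_subset[of "{w. g w \<noteq> 0}"] unfolding closed_support_def by blast

definition unit_truncation :: "('a \<Rightarrow> ereal) \<Rightarrow> nat \<Rightarrow> 'a \<Rightarrow> ereal" where
  "unit_truncation Y n = cinf (csmul (real n) Y) cone"

lemma unit_truncation_apply: "unit_truncation Y n w = min (ereal (real n) * Y w) 1"
  unfolding unit_truncation_def cinf_def csmul_def cone_def by simp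

fun endpoints :: "ivl \<Rightarrow> real set" where
  "endpoints (OC a b) = {a, b}"
| "endpoints (Ray a) = {a}"
| "endpoints (Low b) = {b}"

lemma finite_endpoints: "finite (endpoints J)"
  by (cases J) auto

lemma finite_threshold:
  fixes P :: "real set"
  assumes "finite P" and down: "\<And>a b. a \<le> b \<Longrightarrow> Q b \<Longrightarrow> Q a"
  obtains s where "\<And>a. a \<in> P \<Longrightarrow> Q a \<longleftrightarrow> a < s"
proof
  define s where "s = Min (insert (Max (insert 0 P) + 1) {a\<in>P. \<not> Q a})"
  have fin: "finite (insert (Max (insert 0 P) + 1) {a\<in>P. \<not> Q a})" using assms(1) by simp
  fix a assume a: "a \<in> P"
  show "Q a \<longleftrightarrow> a < s"
  proof
    assume "Q a"
    moreover have "a \<le> Max (insert 0 P)" using assms(1) a by simp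
    then have "a < Max (insert 0 P) + 1" by simp
    ultimately show "a < s" unfolding s_def using fin down by (auto simp: not_le[symmetric] Min_le_iff)
  next
    assume "a < s"
    then show "Q a" unfolding s_def using fin a by (auto simp: Min_less_iff)
  qed
qed

locale stone_model =
  fixes V :: "('k::t2_space \<Rightarrow> ereal) set" and X :: "'k \<Rightarrow> ereal"
  assumes K_compact: "compact (UNIV :: 'k set)"
    and ed: "\<forall>U::'k set. open U \<longrightarrow> open (closure U)"
    and V_ideal: "ideal_in Cinf V"
    and E_in: "cone \<in> V" and X_in: "X \<in> V"
begin

lemma V_Cinf: "g \<in> V \<Longrightarrow> g \<in> Cinf"
  using V_ideal unfolding ideal_in_def by blast

lemma V_continuous: "g \<in> V \<Longrightarrow> continuous_on UNIV g"
  using V_Cinf Cinf_continuous by blast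

lemma V_czero: "czero \<in> V"
  using V_ideal unfolding ideal_in_def by blast

lemma V_cadd: "g \<in> V \<Longrightarrow> h \<in> V \<Longrightarrow> cadd g h \<in> V"
  using V_ideal unfolding ideal_in_def by blast

lemma V_csmul: "g \<in> V \<Longrightarrow> csmul c g \<in> V"
  using V_ideal unfolding ideal_in_def by blast

lemma V_solid: "g \<in> Cinf \<Longrightarrow> h \<in> V \<Longrightarrow> (\<And>w. \<bar>g w\<bar> \<le> \<bar>h w\<bar>) \<Longrightarrow> g \<in> V"
  using V_ideal unfolding ideal_in_def cabs_def le_fun_def by blast

lemma V_abs:
  assumes g: "g \<in> V" shows "(\<lambda>w. \<bar>g w\<bar>) \<in> V"
proof (rule V_solid[OF _ g])
  show "(\<lambda>w. \<bar>g w\<bar>) \<in> Cinf"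
    by (rule Cinf_intro[where S="{w. \<bar>g w\<bar> = \<infinity>}"])
      (use V_Cinf[OF g] V_continuous[OF g] in \<open>auto simp: Cinf_def intro: continuous_intros\<close>)
qed simp

lemma V_bounded:
  assumes "g \<in> Cinf" "\<And>w. \<bar>g w\<bar> \<le> ereal M" shows "g \<in> V"
proof (rule V_solid[OF assms(1) V_csmul[OF E_in, of M]])
  fix w
  have "\<bar>g w\<bar> \<le> ereal \<bar>M\<bar>" using assms(2)[of w] by (rule order_trans) simp
  then show "\<bar>g w\<bar> \<le> \<bar>csmul M cone w\<bar>" by (simp add: csmul_def cone_def)
qed

lemma V_indicator:
  assumes "open S" "closed S" shows "(\<lambda>w. ereal (indicator S w)) \<in> V"
  using continuous_on_indicator_clopen[OF assms]
  by (intro V_bounded[of _ 1] Cinf_of_real) (auto simp: indicator_def)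

text \<open>V has no least element: a least u would satisfy u \<le> -1 and u \<le> 2 u at a point where it
  is finite.\<close>

lemma is_lub_in_nonempty:
  assumes "is_lub_in V S u" shows "S \<noteq> {}"
proof
  assume "S = {}"
  then have u: "u \<in> V" "\<And>v. v \<in> V \<Longrightarrow> u \<le> v" using assms unfolding is_lub_in_def by auto
  obtain w where w: "\<bar>u w\<bar> \<noteq> \<infinity>"
    using closure_Cinf_finite[OF V_Cinf[OF u(1)]] by fastforce
  have "u w \<le> csmul (-1) cone w" "u w \<le> csmul 2 u w"
    using u(2)[OF V_csmul[OF E_in]] u(2)[OF V_csmul[OF u(1)]] by (auto simp: le_fun_def)
  then show False using w by (cases "u w") (auto simp: csmul_def cone_def)
qed

definition supported_in :: "'k set \<Rightarrow> ('k \<Rightarrow> ereal) set" where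
  "supported_in S = {g \<in> V. \<forall>w. w \<notin> S \<longrightarrow> g w = 0}"

lemma ideal_supported_in: "ideal_in V (supported_in S)"
  unfolding ideal_in_def
proof (intro conjI ballI allI impI)
  show "supported_in S \<subseteq> V" "czero \<in> supported_in S"
    unfolding supported_in_def using V_czero by (auto simp: czero_def)
next
  fix g h assume "g \<in> supported_in S" "h \<in> supported_in S"
  then show "cadd g h \<in> supported_in S"
    unfolding supported_in_def using cadd_apply[OF ed V_Cinf V_Cinf] by (auto intro: V_cadd)
next
  fix c g assume "g \<in> supported_in S"
  then show "csmul c g \<in> supported_in S"
    unfolding supported_in_def using V_csmul[of g c] by (auto simp: csmul_def)
next
  fix g h assume g: "g \<in> V" and h: "h \<in> supported_in S" and le: "cabs g \<le> cabs h"
  have "g w = 0" if "w \<notin> S" for w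
  proof -
    have "\<bar>g w\<bar> \<le> \<bar>h w\<bar>" using le by (simp add: cabs_def le_fun_def)
    moreover have "h w = 0" using h that by (simp add: supported_in_def)
    ultimately show ?thesis by (cases "g w") auto
  qed
  then show "g \<in> supported_in S" using g unfolding supported_in_def by simp
qed

lemma band_supported_in:
  assumes S: "open S" "closed S" shows "band_in V (supported_in S)"
  unfolding band_in_def
proof (intro conjI allI impI ideal_supported_in)
  fix A u assume A: "A \<subseteq> supported_in S" and lub: "is_lub_in V A u"
  obtain a where a: "a \<in> A" using is_lub_in_nonempty[OF lub] by blast
  have u: "u \<in> V" "\<And>s. s \<in> A \<Longrightarrow> s \<le> u" "\<And>v. v \<in> V \<Longrightarrow> (\<forall>s\<in>A. s \<le> v) \<Longrightarrow> u \<le> v"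
    using lub unfolding is_lub_in_def by auto
  define u' where "u' w = (if w \<in> S then u w else 0)" for w
  \<comment> \<open>cutting u down to S keeps an upper bound of A, so u \<le> u' by leastness\<close>
  have "continuous_on (S \<union> - S) u'" unfolding u'_def
    using S continuous_on_subset[OF V_continuous[OF u(1)]] by (intro continuous_on_If) auto
  then have "u' \<in> Cinf"
    by (intro Cinf_intro[where S="{w. \<bar>u w\<bar> = \<infinity>}"]) (use V_Cinf[OF u(1)] in \<open>auto simp: Cinf_def u'_def split: if_splits\<close>)
  then have "u' \<in> V" by (rule V_solid[OF _ u(1)]) (simp add: u'_def)
  moreover have "s \<le> u'" if "s \<in> A" for s
    using that A u(2) unfolding supported_in_def le_fun_def u'_def by auto
  ultimately have "u \<le> u'" using u(3) by blast
  show "u \<in> supported_in S"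
    unfolding supported_in_def
  proof (intro CollectI conjI allI impI u(1))
    fix w assume "w \<notin> S"
    have "u w \<le> u' w" "a w \<le> u w" using \<open>u \<le> u'\<close> u(2)[OF a] by (auto simp: le_fun_def)
    moreover have "u' w = 0" "a w = 0" using \<open>w \<notin> S\<close> a A by (auto simp: u'_def supported_in_def)
    ultimately have "u w \<le> 0" "0 \<le> u w" by auto
    then show "u w = 0" by simp
  qed
qed

context
  fixes Y :: "'k \<Rightarrow> ereal"
  assumes Y_V: "Y \<in> V" and Y_nonneg: "\<And>w. 0 \<le> Y w"
begin

lemma open_closed_support: "open (closed_support Y)"
  unfolding closed_support_def
  using ed open_Collect_neq[OF V_continuous[OF Y_V] continuous_on_const] by blast

lemma indicator_closed_support_V: "(\<lambda>w. ereal (indicator (closed_support Y) w)) \<in> V"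
  using open_closed_support by (intro V_indicator) (simp_all add: closed_support_def)

lemma supported_in_closed_support: "Y \<in> supported_in (closed_support Y)"
  unfolding supported_in_def using Y_V zero_outside_closed_support by blast

lemma band_gen_supported: "band_gen V Y \<subseteq> supported_in (closed_support Y)"
  using band_gen_subset[OF band_supported_in supported_in_closed_support] open_closed_support
  by (simp add: closed_support_def)

lemma unit_truncation_bounds: "0 \<le> unit_truncation Y n w" "unit_truncation Y n w \<le> 1"
  using Y_nonneg[of w] by (auto simp: unit_truncation_apply)

lemma unit_truncation_in_band:
  assumes B: "band_in V B" and YB: "Y \<in> B"
  shows "unit_truncation Y n \<in> B"
proof -
  have smul: "csmul (real n) Y \<in> B" and solid: "\<And>g h. g \<in> V \<Longrightarrow> h \<in> B \<Longrightarrow> cabs g \<le> cabs h \<Longrightarrow> g \<in> B"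
    using B YB unfolding band_in_def ideal_in_def by blast+
  have "continuous_on UNIV (unit_truncation Y n)"
    unfolding unit_truncation_def cinf_def cone_def
    by (intro continuous_on_min csmul_continuous V_continuous[OF Y_V] continuous_on_const)
  then have "unit_truncation Y n \<in> Cinf"
  proof (rule Cinf_intro[of _ "{}"])
    show "\<bar>unit_truncation Y n w\<bar> = \<infinity> \<Longrightarrow> w \<in> {}" for w
      using unit_truncation_bounds[of n w] by auto
  qed (simp add: nowhere_dense_def)
  then have "unit_truncation Y n \<in> V"
  proof (rule V_bounded[of _ 1])
    show "\<bar>unit_truncation Y n w\<bar> \<le> ereal 1" for w
      using unit_truncation_bounds[of n w] by (cases "unit_truncation Y n w") auto
  qed
  moreover have "cabs (unit_truncation Y n) \<le> cabs (csmul (real n) Y)"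
    using unit_truncation_bounds Y_nonneg
    by (auto simp: le_fun_def cabs_def csmul_def unit_truncation_apply)
  ultimately show ?thesis using solid smul by blast
qed

lemma is_lub_unit_truncations:
  "is_lub_in V (range (unit_truncation Y)) (\<lambda>w. ereal (indicator (closed_support Y) w))"
  unfolding is_lub_in_def
proof (intro conjI ballI impI)
  show "(\<lambda>w. ereal (indicator (closed_support Y) w)) \<in> V" by (rule indicator_closed_support_V)
next
  fix s assume "s \<in> range (unit_truncation Y)"
  then obtain n where "s = unit_truncation Y n" by blast
  moreover have "unit_truncation Y n w \<le> ereal (indicator (closed_support Y) w)" for w
  proof (cases "w \<in> closed_support Y")
    case False
    then have "Y w = 0" by (rule zero_outside_closed_support)
    then show ?thesis by (simp add: unit_truncation_apply)
  qed (use unit_truncation_bounds(2)[of n w] in \<open>simp add: one_ereal_def\<close>)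
  ultimately show "s \<le> (\<lambda>w. ereal (indicator (closed_support Y) w))" by (simp add: le_fun_def)
next
  fix v assume v: "v \<in> V" and ub: "\<forall>s\<in>range (unit_truncation Y). s \<le> v"
  have ub': "unit_truncation Y n w \<le> v w" for n w using ub by (auto simp: le_fun_def)
  have "{w. Y w \<noteq> 0} \<subseteq> {w. 1 \<le> v w}"
  proof
    fix w assume "w \<in> {w. Y w \<noteq> 0}"
    then have pos: "0 < Y w" using Y_nonneg[of w] by auto
    obtain n :: nat where "1 \<le> ereal (real n) * Y w"
    proof (cases "Y w")
      case (real y)
      obtain n :: nat where "1 / y < real n" using reals_Archimedean2 by blast
      then show ?thesis using real pos by (intro that[of n]) (simp add: field_simps)
    qed (use pos in \<open>auto intro: that[of 1]\<close>)
    then show "w \<in> {w. 1 \<le> v w}" using ub'[of n w] by (simp add: unit_truncation_apply)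
  qed
  then have "closed_support Y \<subseteq> {w. 1 \<le> v w}"
    unfolding closed_support_def
    by (rule closure_minimal) (rule closed_Collect_le[OF continuous_on_const V_continuous[OF v]])
  moreover have "0 \<le> v w" for w
    using ub'[of 0 w] Y_nonneg[of w] by (simp add: unit_truncation_apply zero_ereal_def[symmetric])
  ultimately show "(\<lambda>w. ereal (indicator (closed_support Y) w)) \<le> v"
    by (auto simp: le_fun_def indicator_def one_ereal_def[symmetric] zero_ereal_def[symmetric])
qed

lemma indicator_in_band_gen: "(\<lambda>w. ereal (indicator (closed_support Y) w)) \<in> band_gen V Y"
  unfolding band_gen_def
proof (rule InterI, clarify)
  fix B assume B: "band_in V B" and "Y \<in> B"
  then have "range (unit_truncation Y) \<subseteq> B" using unit_truncation_in_band by blast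
  then show "(\<lambda>w. ereal (indicator (closed_support Y) w)) \<in> B"
    using B is_lub_unit_truncations unfolding band_in_def by blast
qed

lemma coindicator_in_disj_compl:
  "(\<lambda>w. ereal (indicator (- closed_support Y) w)) \<in> disj_compl V (band_gen V Y)"
  unfolding disj_compl_def
proof (intro CollectI conjI ballI)
  show "(\<lambda>w. ereal (indicator (- closed_support Y) w)) \<in> V"
    using open_closed_support by (intro V_indicator) (auto simp: closed_support_def)
  fix h assume "h \<in> band_gen V Y"
  then have h: "h w = 0" if "w \<notin> closed_support Y" for w
    using band_gen_supported that unfolding supported_in_def by blast
  show "cinf (cabs (\<lambda>w. ereal (indicator (- closed_support Y) w))) (cabs h) = czero"
  proof
    fix w show "cinf (cabs (\<lambda>w. ereal (indicator (- closed_support Y) w))) (cabs h) w = czero w"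
      using h[of w] by (cases "w \<in> closed_support Y") (simp_all add: cinf_def cabs_def czero_def zero_ereal_def[symmetric])
  qed
qed

lemma band_proj_cone: "band_proj V Y cone = (\<lambda>w. ereal (indicator (closed_support Y) w))"
  (is "_ = ?P")
  unfolding band_proj_def
proof (rule the_equality)
  have "closed (closed_support Y)" by (simp add: closed_support_def)
  then have "continuous_on UNIV (indicator (closed_support Y) :: 'k \<Rightarrow> real)"
    "continuous_on UNIV (indicator (- closed_support Y) :: 'k \<Rightarrow> real)"
    using open_closed_support by (auto intro: continuous_on_indicator_clopen)
  from cadd_ereal[OF this]
  have "cadd ?P (\<lambda>w. ereal (indicator (- closed_support Y) w)) = cone"
    by (simp add: cone_def indicator_def fun_eq_iff)
  then have "cone = cadd ?P (\<lambda>w. ereal (indicator (- closed_support Y) w))" ..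
  then show "?P \<in> band_gen V Y \<and> (\<exists>W\<in>disj_compl V (band_gen V Y). cone = cadd ?P W)"
    using indicator_in_band_gen coindicator_in_disj_compl by blast
next
  fix P assume "P \<in> band_gen V Y \<and> (\<exists>W\<in>disj_compl V (band_gen V Y). cone = cadd P W)"
  then obtain W where "P \<in> band_gen V Y" and W_compl: "W \<in> disj_compl V (band_gen V Y)"
    and split: "cone = cadd P W"
    by blast
  then have P: "P \<in> supported_in (closed_support Y)" using band_gen_supported by blast
  have W: "W \<in> V" "cinf (cabs W) (cabs ?P) = czero"
    using W_compl indicator_in_band_gen unfolding disj_compl_def by auto
  have PV: "P \<in> V" using P unfolding supported_in_def by blast
  show "P = ?P"
  proof (rule continuous_on_eq_on_dense[OF V_continuous[OF PV] V_continuous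
        closure_Cinf_finite2[OF V_Cinf[OF PV] V_Cinf[OF W(1)]]])
    show "?P \<in> V" by (rule indicator_closed_support_V)
    fix w assume "w \<in> {w. \<bar>P w\<bar> \<noteq> \<infinity> \<and> \<bar>W w\<bar> \<noteq> \<infinity>}"
    then have sum: "P w + W w = 1"
      using cadd_apply[OF ed V_Cinf[OF PV] V_Cinf[OF W(1)], of w] split by (simp add: cone_def fun_eq_iff)
    show "P w = ?P w"
    proof (cases "w \<in> closed_support Y")
      case True
      have "cinf (cabs W) (cabs ?P) w = 0" using W(2) by (simp add: czero_def)
      then have "min \<bar>W w\<bar> 1 = 0" using True by (simp add: cinf_def cabs_def one_ereal_def)
      then have "W w = 0" by (cases "W w") (auto simp: min_def split: if_splits)
      then show ?thesis using sum True by simp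
    next
      case False
      then show ?thesis using P unfolding supported_in_def by simp
    qed
  qed
qed

end

definition above :: "real \<Rightarrow> 'k set" where
  "above t = closure {w. ereal t < X w}"

lemma open_above: "open (above t)"
  unfolding above_def
  using ed open_Collect_less[OF continuous_on_const V_continuous[OF X_in]] by blast

lemma closed_above: "closed (above t)"
  unfolding above_def by simp

lemma above_antimono: "s \<le> t \<Longrightarrow> above t \<subseteq> above s"
  unfolding above_def by (intro closure_mono subsetI) (simp, metis ereal_less_eq(3) le_less_trans)

lemma mem_above: "ereal t < X w \<Longrightarrow> w \<in> above t"
  using closure_subset[of "{w. ereal t < X w}"] unfolding above_def by blast

lemma le_if_mem_above: "w \<in> above t \<Longrightarrow> ereal t \<le> X w"
proof -
  have "{w. ereal t < X w} \<subseteq> {w. ereal t \<le> X w}" by auto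
  moreover have "closed {w. ereal t \<le> X w}"
    by (rule closed_Collect_le[OF continuous_on_const V_continuous[OF X_in]])
  ultimately have "above t \<subseteq> {w. ereal t \<le> X w}" unfolding above_def by (rule closure_minimal)
  then show "w \<in> above t \<Longrightarrow> ereal t \<le> X w" by blast
qed

lemma continuous_on_indicator_above: "continuous_on UNIV (indicator (above t) :: 'k \<Rightarrow> real)"
  by (rule continuous_on_indicator_clopen[OF open_above closed_above])

lemma excess_V: "(\<lambda>w. max (X w - ereal t) 0) \<in> V" (is "?Y \<in> V")
proof -
  have X: "X \<in> Cinf" "continuous_on UNIV X" using X_in V_Cinf V_continuous by auto
  have "continuous_on UNIV (\<lambda>w. X w - ereal t)" unfolding continuous_on_def
    using X(2) unfolding continuous_on_def by (auto intro: tendsto_diff_ereal_general)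
  then have "continuous_on UNIV ?Y" by (intro continuous_on_max continuous_on_const)
  then have Y_Cinf: "?Y \<in> Cinf"
  proof (rule Cinf_intro)
    show "nowhere_dense {w. \<bar>X w\<bar> = \<infinity>}" using X(1) by (simp add: Cinf_def)
    show "w \<in> {w. \<bar>X w\<bar> = \<infinity>}" if "\<bar>?Y w\<bar> = \<infinity>" for w
      using that by (cases "X w") (auto simp: max_def split: if_splits)
  qed
  define H where "H = cadd (\<lambda>w. \<bar>X w\<bar>) (csmul \<bar>t\<bar> cone)"
  have absX: "(\<lambda>w. \<bar>X w\<bar>) \<in> V" by (rule V_abs[OF X_in])
  have H: "H \<in> V" unfolding H_def by (rule V_cadd[OF absX V_csmul[OF E_in]])
  have H_apply: "H w = \<bar>X w\<bar> + ereal \<bar>t\<bar>" if "\<bar>X w\<bar> \<noteq> \<infinity>" for w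
    unfolding H_def using that cadd_apply[OF ed V_Cinf[OF absX] V_Cinf[OF V_csmul[OF E_in]], of w]
    by (simp add: csmul_def cone_def)
  have "\<bar>?Y w\<bar> \<le> \<bar>H w\<bar>" for w
  proof (rule continuous_on_le_on_dense[OF _ _ closure_Cinf_finite[OF X(1)]])
    show "continuous_on UNIV (\<lambda>w. \<bar>?Y w\<bar>)" "continuous_on UNIV (\<lambda>w. \<bar>H w\<bar>)"
      using Y_Cinf H by (auto intro: continuous_intros Cinf_continuous V_continuous)
    fix w assume "w \<in> {w. \<bar>X w\<bar> \<noteq> \<infinity>}"
    then show "\<bar>?Y w\<bar> \<le> \<bar>H w\<bar>" using H_apply[of w] by (cases "X w") auto
  qed
  then show ?thesis by (rule V_solid[OF Y_Cinf H])
qed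

lemma closed_support_excess: "closed_support (\<lambda>w. max (X w - ereal t) 0) = above t"
proof -
  have "max (X w - ereal t) 0 \<noteq> 0 \<longleftrightarrow> ereal t < X w" for w
    by (cases "X w") (auto simp: max_def)
  then show ?thesis unfolding closed_support_def above_def by simp
qed

lemma specA_eq: "specA V X t = (\<lambda>w. ereal (1 - indicator (above t) w))"
proof -
  have "band_proj V (\<lambda>w. max (X w - ereal t) 0) cone = (\<lambda>w. ereal (indicator (above t) w))"
    using band_proj_cone[OF excess_V] closed_support_excess by simp
  then have "specA V X t = cadd (\<lambda>w. ereal 1) (\<lambda>w. ereal (- indicator (above t) w))"
    unfolding specA_def csub_def by (simp add: cone_def one_ereal_def)
  also have "\<dots> = (\<lambda>w. ereal (1 + - indicator (above t) w))"
    using continuous_on_indicator_above by (intro cadd_ereal) (auto intro: continuous_intros)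
  finally show ?thesis by simp
qed

lemma is_lub_specA: "is_lub_in V (range (specA V X)) cone"
  unfolding is_lub_in_def
proof (intro conjI ballI impI E_in)
  fix A assume "A \<in> range (specA V X)"
  then show "A \<le> cone" by (auto simp: specA_eq le_fun_def cone_def)
next
  fix v assume v: "v \<in> V" and ub: "\<forall>A\<in>range (specA V X). A \<le> v"
  have "cone w \<le> v w" for w
  proof (rule continuous_on_le_on_dense[OF _ V_continuous[OF v] closure_Cinf_finite[OF V_Cinf[OF X_in]]])
    show "continuous_on UNIV cone" unfolding cone_def by (rule continuous_on_const)
    fix w assume "w \<in> {w. \<bar>X w\<bar> \<noteq> \<infinity>}"
    then obtain r where r: "X w = ereal r" by auto
    then have "w \<notin> above (r + 1)" using le_if_mem_above[of w "r + 1"] by auto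
    moreover have "specA V X (r + 1) w \<le> v w" using ub by (simp add: le_fun_def)
    ultimately show "cone w \<le> v w" by (simp add: specA_eq cone_def one_ereal_def)
  qed
  then show "cone \<le> v" by (simp add: le_fun_def)
qed

lemma is_glb_specA: "is_glb_in V (range (specA V X)) czero"
  unfolding is_glb_in_def
proof (intro conjI ballI impI V_czero)
  fix A assume "A \<in> range (specA V X)"
  then show "czero \<le> A" by (auto simp: specA_eq le_fun_def czero_def)
next
  fix v assume v: "v \<in> V" and lb: "\<forall>A\<in>range (specA V X). v \<le> A"
  have "v w \<le> czero w" for w
  proof (rule continuous_on_le_on_dense[OF V_continuous[OF v] _ closure_Cinf_finite[OF V_Cinf[OF X_in]]])
    show "continuous_on UNIV czero" unfolding czero_def by (rule continuous_on_const)
    fix w assume "w \<in> {w. \<bar>X w\<bar> \<noteq> \<infinity>}"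
    then obtain r where r: "X w = ereal r" by auto
    then have "w \<in> above (r - 1)" by (intro mem_above) simp
    moreover have "v w \<le> specA V X (r - 1) w" using lb by (simp add: le_fun_def)
    ultimately show "v w \<le> czero w" by (simp add: specA_eq czero_def zero_ereal_def)
  qed
  then show "v \<le> czero" by (simp add: le_fun_def)
qed

lemma specA_top_eq: "specA_top V X = cone"
  unfolding specA_top_def using is_lub_specA is_lub_in_unique by blast

lemma specA_bot_eq: "specA_bot V X = czero"
  unfolding specA_bot_def using is_glb_specA is_glb_in_unique by blast

fun mu_real :: "ivl \<Rightarrow> 'k \<Rightarrow> real" where
  "mu_real (OC a b) w = indicator (above a) w - indicator (above b) w"
| "mu_real (Ray a) w = indicator (above a) w"
| "mu_real (Low b) w = 1 - indicator (above b) w"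

lemma continuous_on_mu_real: "continuous_on UNIV (mu_real J)"
  using continuous_on_indicator_above by (cases J) (auto intro: continuous_intros)

lemma muA_eq: "muA V X J = (\<lambda>w. ereal (mu_real J w))"
proof -
  have A: "continuous_on UNIV (\<lambda>w. 1 - indicator (above t) w :: real)" for t
    using continuous_on_indicator_above by (auto intro: continuous_intros)
  have "csub (\<lambda>w. ereal (p w)) (\<lambda>w. ereal (q w)) = (\<lambda>w. ereal (p w - q w))"
    if "continuous_on UNIV p" "continuous_on UNIV q" for p q :: "'k \<Rightarrow> real"
    unfolding csub_def using cadd_ereal[OF that(1), of "\<lambda>w. - q w"] that(2)
    by (auto intro: continuous_intros)
  note csub_ereal = this
  show ?thesis
  proof (cases J)
    case (OC a b)
    then show ?thesis using csub_ereal[OF A A] by (simp add: specA_eq)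
  next
    case (Ray a)
    then show ?thesis using csub_ereal[OF continuous_on_const A]
      by (simp add: specA_eq specA_top_eq cone_def one_ereal_def)
  next
    case (Low b)
    then show ?thesis using csub_ereal[OF A continuous_on_const]
      by (simp add: specA_eq specA_bot_eq czero_def zero_ereal_def)
  qed
qed

definition rep_real :: "(real \<times> ivl) list \<Rightarrow> 'k \<Rightarrow> real" where
  "rep_real R w = (\<Sum>(c, J)\<leftarrow>R. c * mu_real J w)"

lemma continuous_on_rep_real: "continuous_on UNIV (rep_real R)"
proof (induction R)
  case (Cons p R)
  obtain c J where p: "p = (c, J)" by (cases p)
  have "continuous_on UNIV (\<lambda>w. c * mu_real J w + rep_real R w)"
    using Cons.IH continuous_on_mu_real[of J] by (intro continuous_on_add continuous_on_mult continuous_on_const)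
  then show ?case by (simp add: rep_real_def p)
qed (simp add: rep_real_def)

lemma rep_val_eq: "rep_val V X R = (\<lambda>w. ereal (rep_real R w))"
proof (induction R)
  case Nil
  then show ?case by (simp add: rep_val_def rep_real_def czero_def zero_ereal_def)
next
  case (Cons p R)
  obtain c J where p: "p = (c, J)" by (cases p)
  have "continuous_on UNIV (\<lambda>w. c * mu_real J w)"
    using continuous_on_mu_real by (auto intro: continuous_intros)
  from cadd_ereal[OF this continuous_on_rep_real[of R]] show ?case
    using Cons.IH by (simp add: rep_val_def rep_real_def p muA_eq csmul_def del: mu_real.simps)
qed

lemma mu_real_at:
  assumes "ivl_ok J" and cut: "\<And>a. a \<in> endpoints J \<Longrightarrow> w \<in> above a \<longleftrightarrow> a < s"
  shows "mu_real J w = indicator (ivl_set J) s"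
  using assms by (cases J) (auto simp: indicator_def)

lemma rep_real_at:
  assumes R: "step_rep R g"
    and cut: "\<And>p a. p \<in> set R \<Longrightarrow> a \<in> endpoints (snd p) \<Longrightarrow> w \<in> above a \<longleftrightarrow> a < s"
  shows "rep_real R w = g s"
proof -
  have ok: "\<And>i. i < length R \<Longrightarrow> ivl_ok (snd (R ! i))"
    and g: "g s = (\<Sum>i<length R. if s \<in> ivl_set (snd (R ! i)) then fst (R ! i) else 0)"
    using R unfolding step_rep_def by auto
  have "rep_real R w = (\<Sum>i<length R. fst (R ! i) * mu_real (snd (R ! i)) w)"
    unfolding rep_real_def by (simp add: sum_list_sum_nth lessThan_atLeast0 case_prod_beta)
  also have "\<dots> = g s"
    unfolding g
  proof (intro sum.cong refl)
    fix i assume "i \<in> {..<length R}"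
    then have "R ! i \<in> set R" "ivl_ok (snd (R ! i))" using ok by auto
    then have "mu_real (snd (R ! i)) w = indicator (ivl_set (snd (R ! i))) s"
      using cut by (intro mu_real_at) blast+
    then show "fst (R ! i) * mu_real (snd (R ! i)) w
        = (if s \<in> ivl_set (snd (R ! i)) then fst (R ! i) else 0)"
      by (simp add: indicator_def)
  qed
  finally show ?thesis .
qed

lemma rep_val_unique:
  assumes "step_rep R1 g" "step_rep R2 g"
  shows "rep_val V X R1 = rep_val V X R2"
proof -
  have "rep_real R1 w = rep_real R2 w" for w
  proof -
    let ?P = "\<Union>p\<in>set R1 \<union> set R2. endpoints (snd p)"
    have "finite ?P" using finite_endpoints by auto
    then obtain s where s: "\<And>a. a \<in> ?P \<Longrightarrow> w \<in> above a \<longleftrightarrow> a < s"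
      using finite_threshold[of ?P "\<lambda>a. w \<in> above a"] above_antimono by blast
    have "rep_real R1 w = g s" by (rule rep_real_at[OF assms(1)]) (use s in blast)
    moreover have "rep_real R2 w = g s" by (rule rep_real_at[OF assms(2)]) (use s in blast)
    ultimately show ?thesis by simp
  qed
  then show ?thesis by (simp add: rep_val_eq)
qed

lemma DI_eq: "step_rep R g \<Longrightarrow> DI V X g = rep_val V X R"
  unfolding DI_def by (rule the_equality) (auto intro: rep_val_unique)

lemma DI_continuous: "g \<in> Lspace \<Longrightarrow> continuous_on UNIV (DI V X g)"
  unfolding Lspace_def
  using DI_eq rep_val_eq continuous_on_rep_real continuous_on_ereal by fastforce

lemma DI_at_peak:
  assumes g: "g \<in> Lspace" and x: "X w = ereal x" and peak: "w \<notin> above x"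
  shows "DI V X g w = ereal (g x)"
proof -
  obtain R where R: "step_rep R g" using g unfolding Lspace_def by blast
  have "w \<in> above a \<longleftrightarrow> a < x" for a
    using peak above_antimono[of x a] mem_above[of a w] x by (cases "a < x") auto
  then have "rep_real R w = g x" by (intro rep_real_at[OF R]) blast
  then show ?thesis by (simp add: DI_eq[OF R] rep_val_eq)
qed

definition peaks :: "'k set" where
  "peaks = {w. \<exists>x. X w = ereal x \<and> w \<notin> above x}"

text \<open>X attains its maximum on a compact open set; at a maximiser w no point of the open set lies
  above X w, so w is not in the closure above X w.\<close>

lemma peaks_meet_open:
  assumes "open U" "U \<noteq> {}" shows "U \<inter> peaks \<noteq> {}"
proof -
  let ?D = "{w. \<bar>X w\<bar> \<noteq> \<infinity>}"
  have "\<bar>X w\<bar> \<noteq> \<infinity> \<longleftrightarrow> -\<infinity> < X w \<and> X w < \<infinity>" for w by (cases "X w") auto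
  then have "?D = {w. -\<infinity> < X w} \<inter> {w. X w < \<infinity>}" by auto
  moreover have "open {w. -\<infinity> < X w}" "open {w. X w < \<infinity>}"
    by (intro open_Collect_less continuous_on_const V_continuous[OF X_in])+
  ultimately have "open ?D" by auto
  moreover have "U \<inter> ?D \<noteq> {}"
    using assms closure_Cinf_finite[OF V_Cinf[OF X_in]] open_Int_closure_eq_empty[of U ?D] by auto
  ultimately obtain Q where Q: "open Q" "compact Q" "Q \<noteq> {}" "Q \<subseteq> U \<inter> ?D"
    using extremally_disconnected_compact_open_nhd[OF K_compact ed, of "U \<inter> ?D"] assms(1)
    by (metis all_not_in_conv empty_iff open_Int)
  obtain w where w: "w \<in> Q" "\<And>y. y \<in> Q \<Longrightarrow> X y \<le> X w"
    using continuous_attains_sup[OF Q(2,3) continuous_on_subset[OF V_continuous[OF X_in]]] by blast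
  then obtain x where x: "X w = ereal x" using Q(4) by auto
  have "Q \<inter> {y. ereal x < X y} = {}" using w(2) x by (auto simp: not_less[symmetric])
  then have "Q \<inter> above x = {}" unfolding above_def using open_Int_closure_eq_empty[OF Q(1)] by simp
  then have "w \<in> peaks" unfolding peaks_def using x w(1) by blast
  then show ?thesis using w(1) Q(4) by blast
qed

lemma closure_peaks: "closure peaks = UNIV"
proof -
  have "interior (- peaks) = {}"
    using peaks_meet_open[of "interior (- peaks)"] interior_subset[of "- peaks"] by blast
  then show ?thesis by (simp add: closure_interior)
qed

lemma fcomp_V:
  assumes "continuous_on UNIV f" "\<And>t. \<bar>f t\<bar> \<le> M" shows "fcomp f X \<in> V"
proof (rule V_bounded)
  note fcomp = fcomp_continuous[OF ed V_Cinf[OF X_in] assms] fcomp_bound[OF ed V_Cinf[OF X_in] assms]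
  show "\<bar>fcomp f X w\<bar> \<le> ereal M" for w by (rule fcomp(2))
  show "fcomp f X \<in> Cinf"
  proof (rule Cinf_intro[OF fcomp(1), of "{}"])
    show "\<bar>fcomp f X w\<bar> = \<infinity> \<Longrightarrow> w \<in> {}" for w using fcomp(2)[of w] by simp
  qed (simp add: nowhere_dense_def)
qed

lemma fcomp_nonneg:
  assumes "continuous_on UNIV f" "\<And>t. \<bar>f t\<bar> \<le> M" "\<And>t. 0 \<le> f t" shows "czero \<le> fcomp f X"
proof -
  have "czero w \<le> fcomp f X w" for w
  proof (rule continuous_on_le_on_dense[OF _ fcomp_continuous[OF ed V_Cinf[OF X_in] assms(1,2)]
        closure_Cinf_finite[OF V_Cinf[OF X_in]]])
    show "continuous_on UNIV czero" unfolding czero_def by (rule continuous_on_const)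
    fix w assume "w \<in> {w. \<bar>X w\<bar> \<noteq> \<infinity>}"
    then obtain x where "X w = ereal x" by auto
    then show "czero w \<le> fcomp f X w"
      using fcomp_apply[OF ed V_Cinf[OF X_in] assms(1,2)] assms(3) by (simp add: czero_def)
  qed
  then show ?thesis by (simp add: le_fun_def)
qed

text \<open>Both the integrals and f \<circ> X are continuous, and on the dense set of peaks the integrals
  are the values of the step functions at X.\<close>

lemma is_lub_DI_approx_up:
  assumes f: "continuous_on UNIV f" "\<And>t. \<bar>f t\<bar> \<le> M" and fs: "approx_up fs (\<lambda>t. ereal (f t))"
  shows "is_lub_in (Es V) (range (\<lambda>n. DI V X (fs n))) (fcomp f X)"
proof -
  note fcomp = fcomp_continuous[OF ed V_Cinf[OF X_in] f] fcomp_apply[OF ed V_Cinf[OF X_in] f]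
    fcomp_bound[OF ed V_Cinf[OF X_in] f]
  have fsL: "fs n \<in> Lspace" for n using fs unfolding approx_up_def by auto
  have inc: "incseq (\<lambda>n. ereal (fs n t))" and lim: "(\<lambda>n. ereal (fs n t)) \<longlonglongrightarrow> ereal (f t)" for t
    using fs unfolding approx_up_def by auto
  have at_peak: "DI V X (fs n) w = ereal (fs n x)" "fcomp f X w = ereal (f x)"
    if "X w = ereal x" "w \<notin> above x" for w x n
    using that DI_at_peak[OF fsL] fcomp(2) by auto
  show ?thesis
    unfolding is_lub_in_def
  proof (intro conjI ballI impI)
    have "ereal (- M) \<le> fcomp f X w" for w using fcomp(3)[of w] by (cases "fcomp f X w") auto
    then have "csmul (- M) cone \<le> fcomp f X" by (simp add: le_fun_def csmul_def cone_def)
    then show "fcomp f X \<in> Es V" unfolding Es_def using fcomp(1) V_csmul[OF E_in] by blast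
  next
    fix u assume "u \<in> range (\<lambda>n. DI V X (fs n))"
    then obtain n where u: "u = DI V X (fs n)" by blast
    have "DI V X (fs n) w \<le> fcomp f X w" for w
    proof (rule continuous_on_le_on_dense[OF DI_continuous[OF fsL] fcomp(1) closure_peaks])
      fix w assume "w \<in> peaks"
      then obtain x where "X w = ereal x" "w \<notin> above x" unfolding peaks_def by blast
      then show "DI V X (fs n) w \<le> fcomp f X w"
        using at_peak incseq_le[OF inc lim] by simp
    qed
    then show "u \<le> fcomp f X" unfolding u le_fun_def by blast
  next
    fix v assume v: "v \<in> Es V" and ub: "\<forall>u\<in>range (\<lambda>n. DI V X (fs n)). u \<le> v"
    have "fcomp f X w \<le> v w" for w
    proof (rule continuous_on_le_on_dense[OF fcomp(1) _ closure_peaks])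
      show "continuous_on UNIV v" using v unfolding Es_def by blast
      fix w assume "w \<in> peaks"
      then obtain x where x: "X w = ereal x" "w \<notin> above x" unfolding peaks_def by blast
      have "ereal (fs n x) \<le> v w" for n
        using ub at_peak(1)[OF x, of n, symmetric] by (auto simp: le_fun_def)
      then have "ereal (f x) \<le> v w" by (intro LIMSEQ_le_const2[OF lim]) auto
      then show "fcomp f X w \<le> v w" using at_peak[OF x] by simp
    qed
    then show "fcomp f X \<le> v" unfolding le_fun_def by blast
  qed
qed

end

section \<open>Approximation from below by step functions\<close>

lemma step_rep_intro:
  assumes ok: "\<And>k. k < length R \<Longrightarrow> ivl_ok (snd (R ! k))"
    and ex: "\<And>t. \<exists>k<length R. t \<in> ivl_set (snd (R ! k))"
    and uniq: "\<And>i j t. i < length R \<Longrightarrow> t \<in> ivl_set (snd (R ! i)) \<Longrightarrow>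
      j < length R \<Longrightarrow> t \<in> ivl_set (snd (R ! j)) \<Longrightarrow> i = j"
    and val: "\<And>k t. k < length R \<Longrightarrow> t \<in> ivl_set (snd (R ! k)) \<Longrightarrow> g t = fst (R ! k)"
  shows "step_rep R g"
proof -
  have "g t = (\<Sum>i<length R. if t \<in> ivl_set (snd (R ! i)) then fst (R ! i) else 0)" for t
  proof -
    obtain k where k: "k < length R" "t \<in> ivl_set (snd (R ! k))" using ex[of t] by blast
    have "(\<Sum>i<length R. if t \<in> ivl_set (snd (R ! i)) then fst (R ! i) else 0)
        = (\<Sum>i<length R. if i = k then fst (R ! i) else 0)"
    proof (rule sum.cong[OF refl])
      fix i assume i: "i \<in> {..<length R}"
      show "(if t \<in> ivl_set (snd (R ! i)) then fst (R ! i) else 0) = (if i = k then fst (R ! i) else 0)"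
      proof (cases "i = k")
        case False
        then have "t \<notin> ivl_set (snd (R ! i))" using i k uniq[of i t k] by blast
        then show ?thesis using False by simp
      qed (use k in simp)
    qed
    also have "\<dots> = fst (R ! k)" using k(1) by simp
    also have "\<dots> = g t" using val[OF k] by simp
    finally show ?thesis by simp
  qed
  then have eq: "g = (\<lambda>t. \<Sum>i<length R. if t \<in> ivl_set (snd (R ! i)) then fst (R ! i) else 0)"
    by (rule ext)
  have disj: "ivl_set (snd (R ! i)) \<inter> ivl_set (snd (R ! j)) = {}"
    if "i < length R" "j < length R" "i \<noteq> j" for i j
    using uniq[OF that(1) _ that(2)] that(3) by blast
  have "t \<in> (\<Union>i<length R. ivl_set (snd (R ! i)))" for t
    using ex[of t] by blast
  then have cover: "(\<Union>i<length R. ivl_set (snd (R ! i))) = UNIV" by blast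
  show ?thesis unfolding step_rep_def by (intro conjI allI impI ok disj cover eq)
qed

lemma strict_mono_cell_exists:
  fixes p :: "nat \<Rightarrow> real"
  assumes "strict_mono p" "p 0 < t" "t \<le> p m"
  shows "\<exists>i<m. p i < t \<and> t \<le> p (Suc i)"
  using assms(2,3)
proof (induction m)
  case (Suc m)
  show ?case
  proof (cases "t \<le> p m")
    case True
    then obtain i where "i < m" "p i < t \<and> t \<le> p (Suc i)" using Suc by blast
    then show ?thesis by (intro exI[of _ i]) simp
  next
    case False
    then show ?thesis using Suc.prems by (intro exI[of _ m]) simp
  qed
qed simp

lemma strict_mono_cell_unique:
  fixes p :: "nat \<Rightarrow> real"
  assumes sm: "strict_mono p" and "p i < t" "t \<le> p (Suc i)" "p j < t" "t \<le> p (Suc j)"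
  shows "i = j"
proof (rule ccontr)
  assume "i \<noteq> j"
  then have "Suc i \<le> j \<or> Suc j \<le> i" by auto
  then show False
  proof
    assume "Suc i \<le> j"
    then have "p (Suc i) \<le> p j" by (simp add: strict_mono_less_eq[OF sm])
    then show False using assms(3,4) by linarith
  next
    assume "Suc j \<le> i"
    then have "p (Suc j) \<le> p i" by (simp add: strict_mono_less_eq[OF sm])
    then show False using assms(2,5) by linarith
  qed
qed

lemma grid_step_Lspace:
  fixes p :: "nat \<Rightarrow> real"
  assumes sm: "strict_mono p"
    and left: "\<And>t. t \<le> p 0 \<Longrightarrow> g t = cL" and right: "\<And>t. p m < t \<Longrightarrow> g t = cR"
    and cell: "\<And>i t. i < m \<Longrightarrow> p i < t \<Longrightarrow> t \<le> p (Suc i) \<Longrightarrow> g t = c i"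
  shows "g \<in> Lspace"
proof -
  define R where "R = (cL, Low (p 0)) # (cR, Ray (p m)) # map (\<lambda>i. (c i, OC (p i) (p (Suc i)))) [0..<m]"
  have le: "p i \<le> p j" if "i \<le> j" for i j using sm that by (simp add: strict_mono_less_eq)
  have len: "length R = Suc (Suc m)" unfolding R_def by simp
  have mem: "k < length R \<and> t \<in> ivl_set (snd (R ! k)) \<longleftrightarrow>
      (k = 0 \<and> t \<le> p 0) \<or> (k = 1 \<and> p m < t) \<or> (\<exists>i<m. k = Suc (Suc i) \<and> p i < t \<and> t \<le> p (Suc i))" for k t
    unfolding R_def by (cases k; cases "k - 1") auto
  have not_AB: "t \<le> p 0 \<Longrightarrow> \<not> p m < t" for t using le[of 0 m] by simp
  have not_AC: "t \<le> p 0 \<Longrightarrow> \<not> p i < t" for t i using le[of 0 i] by simp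
  have not_BC: "p m < t \<Longrightarrow> i < m \<Longrightarrow> \<not> t \<le> p (Suc i)" for t i using le[of "Suc i" m] by simp
  show ?thesis
    unfolding Lspace_def
  proof (rule CollectI, rule exI, rule step_rep_intro)
    fix k assume "k < length R"
    then show "ivl_ok (snd (R ! k))"
      unfolding R_def by (cases k; cases "k - 1") (auto simp: strict_monoD[OF sm])
  next
    fix t
    have "t \<le> p 0 \<or> p m < t \<or> (\<exists>i<m. p i < t \<and> t \<le> p (Suc i))"
      by (cases "t \<le> p 0"; cases "p m < t") (simp_all add: strict_mono_cell_exists[OF sm])
    then show "\<exists>k<length R. t \<in> ivl_set (snd (R ! k))"
    proof (elim disjE exE conjE)
      assume "t \<le> p 0" then show ?thesis using mem[of 0 t] by blast
    next
      assume "p m < t" then show ?thesis using mem[of 1 t] by blast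
    next
      fix i assume "i < m" "p i < t" "t \<le> p (Suc i)"
      then show ?thesis using mem[of "Suc (Suc i)" t] by blast
    qed
  next
    fix i j t assume "i < length R" "t \<in> ivl_set (snd (R ! i))" "j < length R" "t \<in> ivl_set (snd (R ! j))"
    then show "i = j"
      using mem[of i t] mem[of j t] not_AB not_AC not_BC strict_mono_cell_unique[OF sm] by auto
  next
    fix k t assume "k < length R" "t \<in> ivl_set (snd (R ! k))"
    then show "g t = fst (R ! k)"
      using mem[of k t] left right cell unfolding R_def by auto
  qed
qed

text \<open>The left end point a of the dyadic interval (a, a + 1/2^n] containing t.\<close>

definition dyadic_left :: "nat \<Rightarrow> real \<Rightarrow> real" where
  "dyadic_left n t = (of_int \<lceil>2 ^ n * t\<rceil> - 1) / 2 ^ n"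

lemma dyadic_left_less: "dyadic_left n t < t"
  using ceiling_correct[of "2 ^ n * t"] unfolding dyadic_left_def by (simp add: divide_less_eq mult.commute)

lemma le_dyadic_left_add: "t \<le> dyadic_left n t + 1 / 2 ^ n"
proof -
  have "dyadic_left n t + 1 / 2 ^ n = of_int \<lceil>2 ^ n * t\<rceil> / 2 ^ n"
    unfolding dyadic_left_def by (simp add: field_simps)
  then show ?thesis using le_of_int_ceiling[of "2 ^ n * t"] by (simp add: le_divide_eq mult.commute)
qed

lemma dyadic_left_grid:
  assumes "- real n + real i / 2 ^ n < t" "t \<le> - real n + real (Suc i) / 2 ^ n"
  shows "dyadic_left n t = - real n + real i / 2 ^ n"
proof -
  have "- real n * 2 ^ n + real i < 2 ^ n * t" "2 ^ n * t \<le> - real n * 2 ^ n + real i + 1"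
    using assms by (simp_all add: field_simps)
  then have "\<lceil>2 ^ n * t\<rceil> = - int n * 2 ^ n + int i + 1" unfolding ceiling_eq_iff by simp
  then have "of_int \<lceil>2 ^ n * t\<rceil> - 1 = - real n * 2 ^ n + real i" by simp
  then show ?thesis unfolding dyadic_left_def by (simp add: field_simps)
qed

lemma ceiling_double:
  fixes u :: real
  shows "\<lceil>2 * u\<rceil> \<le> 2 * \<lceil>u\<rceil>" "2 * \<lceil>u\<rceil> - 1 \<le> \<lceil>2 * u\<rceil>"
proof -
  show "\<lceil>2 * u\<rceil> \<le> 2 * \<lceil>u\<rceil>" unfolding ceiling_le_iff using le_of_int_ceiling[of u] by simp
  have "of_int \<lceil>u\<rceil> - 1 < u" using ceiling_correct[of u] by simp
  then have "of_int (2 * \<lceil>u\<rceil> - 1) - 1 < 2 * u" by simp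
  then show "2 * \<lceil>u\<rceil> - 1 \<le> \<lceil>2 * u\<rceil>" unfolding le_ceiling_iff .
qed

lemma dyadic_left_nested:
  "dyadic_left n t \<le> dyadic_left (Suc n) t"
  "dyadic_left (Suc n) t + 1 / 2 ^ Suc n \<le> dyadic_left n t + 1 / 2 ^ n"
proof -
  define u where "u = 2 ^ n * t"
  have N: "(0::real) < 2 ^ n" by simp
  have lo: "dyadic_left n t = (of_int \<lceil>u\<rceil> - 1) / 2 ^ n"
    and los: "dyadic_left (Suc n) t = (of_int \<lceil>2 * u\<rceil> - 1) / (2 * 2 ^ n)"
    unfolding dyadic_left_def u_def by (simp_all add: mult.assoc)
  have c: "real_of_int (2 * \<lceil>u\<rceil> - 1) \<le> of_int \<lceil>2 * u\<rceil>" "real_of_int \<lceil>2 * u\<rceil> \<le> of_int (2 * \<lceil>u\<rceil>)"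
    using ceiling_double[of u] by (simp_all only: of_int_le_iff)
  have "dyadic_left n t = (2 * of_int \<lceil>u\<rceil> - 2) / (2 * 2 ^ n)" unfolding lo by (simp add: field_simps)
  also have "\<dots> \<le> (of_int \<lceil>2 * u\<rceil> - 1) / (2 * 2 ^ n)" using c(1) by (intro divide_right_mono) auto
  finally show "dyadic_left n t \<le> dyadic_left (Suc n) t" unfolding los .
  have "dyadic_left (Suc n) t + 1 / 2 ^ Suc n = of_int \<lceil>2 * u\<rceil> / (2 * 2 ^ n)"
    unfolding los by (simp add: field_simps)
  also have "\<dots> \<le> (2 * of_int \<lceil>u\<rceil>) / (2 * 2 ^ n)" using c(2) by (intro divide_right_mono) auto
  also have "\<dots> = dyadic_left n t + 1 / 2 ^ n" unfolding lo by (simp add: field_simps)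
  finally show "dyadic_left (Suc n) t + 1 / 2 ^ Suc n \<le> dyadic_left n t + 1 / 2 ^ n" .
qed

definition lower_step :: "(real \<Rightarrow> real) \<Rightarrow> nat \<Rightarrow> real \<Rightarrow> real" where
  "lower_step f n t = (if - real n < t \<and> t \<le> real n
     then Inf (f ` {dyadic_left n t .. dyadic_left n t + 1 / 2 ^ n}) else 0)"

lemma lower_step_Lspace: "lower_step f n \<in> Lspace"
proof -
  define p where "p i = - real n + real i / 2 ^ n" for i
  define m where "m = 2 * n * 2 ^ n"
  have sm: "strict_mono p" unfolding p_def by (rule strict_monoI) (simp add: divide_strict_right_mono)
  have p0: "p 0 = - real n" and pm: "p m = real n" unfolding p_def m_def by simp_all
  show ?thesis
  proof (rule grid_step_Lspace[OF sm, where cL=0 and cR=0 and c="\<lambda>i. Inf (f ` {p i..p (Suc i)})"])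
    fix i t assume i: "i < m" and t: "p i < t" "t \<le> p (Suc i)"
    have "p 0 \<le> p i" "p (Suc i) \<le> p m" using sm i by (simp_all add: strict_mono_less_eq)
    moreover have "dyadic_left n t = p i" unfolding p_def by (rule dyadic_left_grid) (use t in \<open>simp_all add: p_def\<close>)
    moreover have "p i + 1 / 2 ^ n = p (Suc i)" unfolding p_def by (simp add: add_divide_distrib)
    ultimately show "lower_step f n t = Inf (f ` {p i..p (Suc i)})"
      unfolding lower_step_def using t p0 pm by auto
  qed (auto simp: lower_step_def p0 pm)
qed

lemma bdd_below_image_Icc:
  fixes f :: "real \<Rightarrow> real"
  assumes "continuous_on UNIV f" shows "bdd_below (f ` {a..b})"
  by (rule bounded_imp_bdd_below[OF compact_imp_bounded[OF compact_continuous_image[OF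
        continuous_on_subset[OF assms] compact_Icc]]]) simp

lemma lower_step_mono:
  fixes f :: "real \<Rightarrow> real"
  assumes f: "continuous_on UNIV f" and nonneg: "\<And>t. 0 \<le> f t"
  shows "lower_step f n t \<le> lower_step f (Suc n) t"
proof (cases "- real n < t \<and> t \<le> real n")
  case True
  then have "- real (Suc n) < t \<and> t \<le> real (Suc n)" by auto
  moreover have "Inf (f ` {dyadic_left n t .. dyadic_left n t + 1 / 2 ^ n})
      \<le> Inf (f ` {dyadic_left (Suc n) t .. dyadic_left (Suc n) t + 1 / 2 ^ Suc n})"
    using dyadic_left_nested[of n t] by (intro cInf_superset_mono bdd_below_image_Icc[OF f]) auto
  ultimately show ?thesis using True unfolding lower_step_def by simp
next
  case False
  have "0 \<le> Inf (f ` {a..b})" if "a \<le> b" for a b using that nonneg by (intro cInf_greatest) auto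
  then have "0 \<le> lower_step f (Suc n) t" unfolding lower_step_def by simp
  moreover have "lower_step f n t = 0" unfolding lower_step_def using False by (rule if_not_P)
  ultimately show ?thesis by simp
qed

lemma lower_step_tendsto:
  fixes f :: "real \<Rightarrow> real"
  assumes f: "continuous_on UNIV f"
  shows "(\<lambda>n. lower_step f n t) \<longlonglongrightarrow> f t"
proof (rule LIMSEQ_I)
  fix r :: real assume r: "0 < r"
  obtain d where d: "0 < d" "\<And>y. dist y t < d \<Longrightarrow> dist (f y) (f t) < r / 2"
    using f r unfolding continuous_on_iff by (metis UNIV_I half_gt_zero)
  obtain N1 :: nat where N1: "\<bar>t\<bar> < real N1" using reals_Archimedean2 by blast
  obtain N2 :: nat where N2: "(1/2::real) ^ N2 < d" using real_arch_pow_inv[OF d(1), of "1/2"] by auto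
  show "\<exists>no. \<forall>n\<ge>no. norm (lower_step f n t - f t) < r"
  proof (intro exI allI impI)
    fix n assume n: "max N1 N2 \<le> n"
    let ?I = "{dyadic_left n t .. dyadic_left n t + 1 / 2 ^ n}"
    have "(1/2::real) ^ n \<le> (1/2) ^ N2" using n by (intro power_decreasing) auto
    then have small: "1 / (2::real) ^ n < d" using N2 by (simp add: power_one_over)
    have I: "t \<in> ?I" using dyadic_left_less[of n t] le_dyadic_left_add[of t n] by simp
    have step: "lower_step f n t = Inf (f ` ?I)" using N1 n unfolding lower_step_def by auto
    have "Inf (f ` ?I) \<le> f t" using I by (intro cInf_lower bdd_below_image_Icc[OF f]) auto
    moreover have "f t - r / 2 \<le> Inf (f ` ?I)"
    proof (rule cInf_greatest)
      fix z assume "z \<in> f ` ?I"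
      then obtain y where "y \<in> ?I" "z = f y" by blast
      then have "dist y t < d" using I small by (auto simp: dist_real_def)
      then have "\<bar>f y - f t\<bar> < r / 2" using d(2) by (simp add: dist_real_def)
      then show "f t - r / 2 \<le> z" using \<open>z = f y\<close> by linarith
    qed (use I in blast)
    ultimately show "norm (lower_step f n t - f t) < r" using step r by simp
  qed
qed

lemma Lup_of_continuous_nonneg:
  fixes f :: "real \<Rightarrow> real"
  assumes "continuous_on UNIV f" "\<And>t. 0 \<le> f t"
  shows "(\<lambda>t. ereal (f t)) \<in> Lup"
proof -
  have "approx_up (lower_step f) (\<lambda>t. ereal (f t))"
    unfolding approx_up_def
    using lower_step_Lspace lower_step_mono[OF assms] lower_step_tendsto[OF assms(1)]
    by (auto intro: incseq_SucI tendsto_ereal)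
  then show ?thesis unfolding Lup_def by blast
qed

lemma bounded_if_bounded_support:
  fixes f :: "real \<Rightarrow> real"
  assumes f: "continuous_on UNIV f" and supp: "bounded (closure {t. f t \<noteq> 0})"
  obtains M where "\<And>t. \<bar>f t\<bar> \<le> M"
proof -
  let ?S = "closure {t. f t \<noteq> 0}"
  have "compact (f ` ?S)"
    using supp by (intro compact_continuous_image continuous_on_subset[OF f]) (auto simp: compact_eq_bounded_closed)
  then obtain B where B: "\<And>y. y \<in> f ` ?S \<Longrightarrow> \<bar>y\<bar> \<le> B" unfolding bounded_real by (meson compact_imp_bounded bounded_real)
  have "\<bar>f t\<bar> \<le> max B 0" for t
    using B[of "f t"] closure_subset[of "{t. f t \<noteq> 0}"] by (cases "f t = 0") auto
  then show thesis by (rule that)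
qed

theorem mainTheorem5:
  fixes V :: "('k::t2_space \<Rightarrow> ereal) set"
    and X :: "'k \<Rightarrow> ereal"
    and f :: "real \<Rightarrow> real"
  assumes K_compact: "compact (UNIV :: 'k set)"
    and K_extr_disc: "\<forall>U::'k set. open U \<longrightarrow> open (closure U)"
    and V_ideal: "ideal_in Cinf V"
    and V_order_dense: "\<forall>g\<in>Cinf. czero \<le> g \<and> g \<noteq> czero \<longrightarrow> (\<exists>h\<in>V. czero \<le> h \<and> h \<noteq> czero \<and> h \<le> g)"
    and V_order_complete: "\<forall>S. S \<subseteq> V \<and> S \<noteq> {} \<and> (\<exists>b\<in>V. \<forall>s\<in>S. s \<le> b) \<longrightarrow> (\<exists>u. is_lub_in V S u)"
    and E_in: "cone \<in> V"
    and X_in: "X \<in> V"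
    and f_cont: "continuous_on UNIV f"
    and f_pos: "\<forall>t. 0 \<le> f t"
    and f_supp: "bounded (closure {t. f t \<noteq> 0})"
  shows "(\<lambda>t. ereal (f t)) \<in> Lup
    \<and> (\<forall>fs. approx_up fs (\<lambda>t. ereal (f t)) \<longrightarrow>
          is_lub_in (Es V) (range (\<lambda>n. DI V X (fs n))) (fcomp f X))
    \<and> fcomp f X \<in> V \<and> czero \<le> fcomp f X"
proof -
  interpret stone_model V X
    by (rule stone_model.intro[OF K_compact K_extr_disc V_ideal E_in X_in])
  obtain M where M: "\<And>t. \<bar>f t\<bar> \<le> M" using bounded_if_bounded_support[OF f_cont f_supp] by blast
  have f_nonneg: "\<And>t. 0 \<le> f t" using f_pos by blast
  show ?thesis
    using Lup_of_continuous_nonneg[OF f_cont f_nonneg] is_lub_DI_approx_up[OF f_cont M]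
      fcomp_V[OF f_cont M] fcomp_nonneg[OF f_cont M f_nonneg]
    by blast
qed

end
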